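(* Let $p$ be a prime and let $m,n,w\in\mathbb{N}$ with $m<p$ and $n=m+pw$. Let $\gamma$ be a partition of $m$ and let $a\in\mathbb{N}$ satisfy $\lfloor\frac{w+1}{2}\rfloor+1\le a\le w$. Set $\lambda=\gamma\star(ap,(w-a)p)$ and $\mu=\gamma\star((a-1)p,(w-a+1)p)$. Then $\chi^\lambda(1)<\chi^\mu(1)$.
   Context: For a partition $\gamma=(\gamma_1,\ldots,\gamma_\ell)$ of $m$ and natural numbers $x,y$, $\gamma\star(x,y)$ denotes the partition $(\gamma_1+x,\gamma_2,\ldots,\gamma_\ell,1^y)$ of $m+x+y$. For a partition $\nu$ of $n$, $\chi^\nu$ denotes the irreducible character of the symmetric group $\mathfrak{S}_n$ labelled by $\nu$. *)

theory Defs
  imports Main "HOL-Computational_Algebra.Primes"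
begin

definition is_partition :: "nat \<Rightarrow> nat list \<Rightarrow> bool" where
  "is_partition m \<gamma> \<longleftrightarrow> sorted_wrt (\<ge>) \<gamma> \<and> (\<forall>k\<in>set \<gamma>. 0 < k) \<and> sum_list \<gamma> = m"

text \<open>gamma star (x,y) = (gamma_1 + x, gamma_2, ..., gamma_l, 1^y); for the empty
  partition gamma_1 is read as 0.\<close>

definition star :: "nat list \<Rightarrow> nat \<Rightarrow> nat \<Rightarrow> nat list" where
  "star \<gamma> x y = (case \<gamma> of [] \<Rightarrow> (if x = 0 then [] else [x]) | g # gs \<Rightarrow> (g + x) # gs) @ replicate y 1"

definition young_diagram :: "nat list \<Rightarrow> (nat \<times> nat) set" where
  "young_diagram la = {(i, j). i < length la \<and> j < la ! i}"

definition is_syt :: "nat list \<Rightarrow> (nat \<times> nat \<Rightarrow> nat) \<Rightarrow> bool" where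
  "is_syt la T \<longleftrightarrow>
     bij_betw T (young_diagram la) {1..sum_list la} \<and>
     (\<forall>i j i' j'. (i, j) \<in> young_diagram la \<and> (i', j') \<in> young_diagram la \<and>
         i \<le> i' \<and> j \<le> j' \<and> (i, j) \<noteq> (i', j') \<longrightarrow> T (i, j) < T (i', j')) \<and>
     (\<forall>c. c \<notin> young_diagram la \<longrightarrow> T c = 0)"

text \<open>The degree chi^lambda(1) of the irreducible character of the symmetric group
  labelled by lambda, i.e. the dimension of the Specht module, which equals the
  number of standard Young tableaux of shape lambda.\<close>

definition char_degree :: "nat list \<Rightarrow> nat" where
  "char_degree la = card {T. is_syt la T}"

end

theory Submission
  imports Defs "HOL.Binomial_Plus" "HOL-Library.FuncSet" "HOL-Library.Product_Order"
    "HOL-Library.Nat_Bijection"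
begin

text \<open>A standard Young tableau of shape \<open>\<lambda> = \<gamma> \<star> (x, y)\<close> is a natural labelling of
  the cells of \<open>\<lambda>\<close>, ordered componentwise. Restricting it to the cells of \<open>\<gamma>\<close> and
  standardizing gives a tableau \<open>U\<close> of shape \<open>\<gamma>\<close>, and the tableaux over a fixed \<open>U\<close> can be
  counted exactly: the arm (the \<open>x\<close> new cells of the first row) and the leg (the \<open>y\<close> new
  cells of the first column) are chains hanging above the corners \<open>\<alpha>\<close> and \<open>\<beta>\<close> of \<open>\<gamma>\<close>,
  and a chain of length \<open>x\<close> hanging above a cell labelled \<open>i\<close> in a poset with \<open>N\<close> cells
  receives an arbitrary \<open>x\<close>-subset of \<open>{i + 1..N + x}\<close>, in \<open>(N + x - i) choose x\<close> ways.
  Attaching first the chain at the corner with the larger label, the degree \<open>\<chi>\<^sup>\<lambda>(1)\<close>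
  becomes a sum over \<open>U\<close> of products of two binomial coefficients. Moving \<open>p\<close> cells
  from the arm to the leg increases every summand as soon as \<open>x \<ge> y + p + m\<close> and
  \<open>x + 1 \<ge> y + 2p\<close>, by unimodality of binomial coefficients; for \<open>x = ap\<close>,
  \<open>y = (w - a)p\<close> both follow from \<open>a > (w + 1) div 2\<close> and \<open>m < p\<close>.\<close>

section \<open>Ranks and \<open>k\<close>-th least elements\<close>

definition rank_in :: "'a set \<Rightarrow> ('a \<Rightarrow> 'b::linorder) \<Rightarrow> 'a \<Rightarrow> nat" where
  "rank_in D f c = card {d\<in>D. f d \<le> f c}"

lemma rank_in_less:
  assumes "finite D" "c \<in> D" "d \<in> D" "f c < f d"
  shows "rank_in D f c < rank_in D f d"
proof -
  have "d \<notin> {e\<in>D. f e \<le> f c}" using assms(4) by auto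
  then have "{e\<in>D. f e \<le> f c} \<subset> {e\<in>D. f e \<le> f d}" using assms by auto
  then show ?thesis unfolding rank_in_def using assms(1) by (intro psubset_card_mono) auto
qed

lemma rank_in_le_iff:
  assumes "finite D" "c \<in> D" "d \<in> D" "inj_on f D"
  shows "rank_in D f c \<le> rank_in D f d \<longleftrightarrow> f c \<le> f d"
proof
  assume "rank_in D f c \<le> rank_in D f d"
  then show "f c \<le> f d" using rank_in_less[OF assms(1,3,2), of f] by (meson not_le)
next
  assume "f c \<le> f d"
  then show "rank_in D f c \<le> rank_in D f d"
    unfolding rank_in_def using assms(1) by (intro card_mono) auto
qed

lemma rank_in_less_iff:
  assumes "finite D" "c \<in> D" "d \<in> D" "inj_on f D"
  shows "rank_in D f c < rank_in D f d \<longleftrightarrow> f c < f d"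
  using rank_in_le_iff[OF assms(1,3,2,4)] by (meson not_le)

lemma inj_on_rank_in:
  assumes "finite D" "inj_on f D"
  shows "inj_on (rank_in D f) D"
proof (rule inj_onI)
  fix c d assume "c \<in> D" "d \<in> D" "rank_in D f c = rank_in D f d"
  then have "f c = f d" using rank_in_le_iff[OF assms(1) _ _ assms(2)] by (metis order_antisym order_refl)
  then show "c = d" using assms(2) \<open>c \<in> D\<close> \<open>d \<in> D\<close> by (meson inj_onD)
qed

lemma bij_betw_rank_in:
  assumes "finite D" "inj_on f D"
  shows "bij_betw (rank_in D f) D {1..card D}"
proof -
  have "rank_in D f ` D \<subseteq> {1..card D}"
  proof
    fix k assume "k \<in> rank_in D f ` D"
    then obtain c where c: "c \<in> D" "k = rank_in D f c" by auto
    have "{d\<in>D. f d \<le> f c} \<noteq> {}" using c by auto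
    then have "1 \<le> card {d\<in>D. f d \<le> f c}" using assms(1) by (simp add: Suc_leI card_gt_0_iff)
    moreover have "card {d\<in>D. f d \<le> f c} \<le> card D" using assms(1) by (intro card_mono) auto
    ultimately show "k \<in> {1..card D}" using c unfolding rank_in_def by auto
  qed
  moreover have "inj_on (rank_in D f) D" using assms by (rule inj_on_rank_in)
  ultimately show ?thesis
    by (simp add: bij_betw_def card_image card_subset_eq)
qed

lemma rank_in_eq_self:
  assumes "finite D" "bij_betw f D {1..card D}" "c \<in> D"
  shows "rank_in D f c = f c"
proof -
  have inj: "inj_on f D" using assms(2) bij_betw_def by blast
  have "f c \<le> card D" using assms(2,3) by (auto simp: bij_betw_def)
  then have "f ` {d\<in>D. f d \<le> f c} = {1..f c}"
    using assms(2) unfolding bij_betw_def by (force simp: image_iff)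
  then have "card {d\<in>D. f d \<le> f c} = card {1..f c}"
    using card_image inj_on_subset[OF inj] by (metis (no_types, lifting) mem_Collect_eq subsetI)
  then show ?thesis unfolding rank_in_def by simp
qed

text \<open>The \<open>k\<close>-th smallest element of \<open>S\<close>, counting from 1.\<close>

definition kth_least :: "nat set \<Rightarrow> nat \<Rightarrow> nat" where
  "kth_least S = inv_into S (rank_in S id)"

lemma bij_betw_kth_least: "finite S \<Longrightarrow> bij_betw (kth_least S) {1..card S} S"
  unfolding kth_least_def by (rule bij_betw_inv_into) (rule bij_betw_rank_in, auto)

lemma rank_in_kth_least: "finite S \<Longrightarrow> k \<in> {1..card S} \<Longrightarrow> rank_in S id (kth_least S k) = k"
  unfolding kth_least_def using bij_betw_rank_in[of S id] by (simp add: bij_betw_def f_inv_into_f)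

lemma kth_least_rank_in: "finite S \<Longrightarrow> s \<in> S \<Longrightarrow> kth_least S (rank_in S id s) = s"
  unfolding kth_least_def using inj_on_rank_in[of S id] by (simp add: inv_into_f_f)

lemma kth_least_less_iff:
  assumes "finite S" "k \<in> {1..card S}" "k' \<in> {1..card S}"
  shows "kth_least S k < kth_least S k' \<longleftrightarrow> k < k'"
proof -
  have "kth_least S k \<in> S" "kth_least S k' \<in> S"
    using bij_betw_kth_least[OF assms(1)] assms(2,3) by (auto simp: bij_betw_def)
  then show ?thesis
    using rank_in_less_iff[OF assms(1), of "kth_least S k" "kth_least S k'" id]
      rank_in_kth_least[OF assms(1)] assms(2,3) by simp
qed

lemma kth_least_le_iff:
  assumes "finite S" "k \<in> {1..card S}" "k' \<in> {1..card S}"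
  shows "kth_least S k \<le> kth_least S k' \<longleftrightarrow> k \<le> k'"
  using kth_least_less_iff[OF assms(1,3,2)] by (meson not_le)

lemma kth_least_initial_segment:
  assumes "finite S" "0 \<notin> S" "{1..k} \<subseteq> S" "1 \<le> k"
  shows "kth_least S k = k"
proof -
  have "k \<in> S" using assms by auto
  moreover have "{s\<in>S. id s \<le> id k} = {1..k}" using assms by (auto simp: Suc_le_eq) (metis gr0I)
  ultimately show ?thesis
    using kth_least_rank_in[OF assms(1), of k] unfolding rank_in_def by simp
qed

lemma strict_mono_bij_betw_eq_kth_least:
  fixes h :: "'a \<Rightarrow> 'b::linorder"
  assumes "finite A" "bij_betw F A B" "inj_on h A"
    and mono: "\<And>a b. a \<in> A \<Longrightarrow> b \<in> A \<Longrightarrow> h a < h b \<Longrightarrow> F a < F b" and "a \<in> A"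
  shows "F a = kth_least B (rank_in A h a)"
proof -
  have injF: "inj_on F A" and FA: "F ` A = B" using assms(2) by (auto simp: bij_betw_def)
  have "F a' \<le> F a \<longleftrightarrow> h a' \<le> h a" if "a' \<in> A" for a'
    using mono[OF that \<open>a \<in> A\<close>] mono[OF \<open>a \<in> A\<close> that] inj_onD[OF assms(3) _ that \<open>a \<in> A\<close>]
    by (metis leD le_less linorder_le_less_linear)
  then have "{b\<in>B. id b \<le> id (F a)} = F ` {a'\<in>A. h a' \<le> h a}" using FA by auto
  then have "rank_in B id (F a) = rank_in A h a"
    unfolding rank_in_def using card_image inj_on_subset[OF injF] by (metis (no_types, lifting) mem_Collect_eq subsetI)
  moreover have "finite B" "F a \<in> B" using assms(1,5) FA by auto
  ultimately show ?thesis using kth_least_rank_in by metis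
qed

section \<open>Natural labellings of finite posets\<close>

definition natural_labelling :: "'a::order set \<Rightarrow> ('a \<Rightarrow> nat) \<Rightarrow> bool" where
  "natural_labelling E T \<longleftrightarrow> bij_betw T E {1..card E} \<and>
     (\<forall>c\<in>E. \<forall>d\<in>E. c < d \<longrightarrow> T c < T d) \<and> (\<forall>c. c \<notin> E \<longrightarrow> T c = 0)"

lemma natural_labellingI:
  assumes "bij_betw T E {1..card E}" "\<And>c d. c \<in> E \<Longrightarrow> d \<in> E \<Longrightarrow> c < d \<Longrightarrow> T c < T d"
    and "\<And>c. c \<notin> E \<Longrightarrow> T c = 0"
  shows "natural_labelling E T"
  unfolding natural_labelling_def using assms by blast

lemma natural_labelling_bij: "natural_labelling E T \<Longrightarrow> bij_betw T E {1..card E}"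
  unfolding natural_labelling_def by simp

lemma natural_labelling_inj: "natural_labelling E T \<Longrightarrow> inj_on T E"
  unfolding natural_labelling_def bij_betw_def by blast

lemma natural_labelling_less:
  "natural_labelling E T \<Longrightarrow> c \<in> E \<Longrightarrow> d \<in> E \<Longrightarrow> c < d \<Longrightarrow> T c < T d"
  unfolding natural_labelling_def by blast

lemma natural_labelling_outside: "natural_labelling E T \<Longrightarrow> c \<notin> E \<Longrightarrow> T c = 0"
  unfolding natural_labelling_def by blast

lemma finite_natural_labellings:
  assumes "finite E"
  shows "finite {T. natural_labelling E T}"
proof -
  have "restrict T E \<in> PiE E (\<lambda>_. {1..card E})" if "natural_labelling E T" for T
    using bij_betwE[OF natural_labelling_bij[OF that]] by simp
  then have "(\<lambda>T. restrict T E) ` {T. natural_labelling E T} \<subseteq> PiE E (\<lambda>_. {1..card E})"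
    by blast
  then have "finite ((\<lambda>T. restrict T E) ` {T. natural_labelling E T})"
    by (rule finite_subset) (simp add: finite_PiE assms)
  moreover have "inj_on (\<lambda>T. restrict T E) {T. natural_labelling E T}"
  proof (rule inj_onI, rule ext)
    fix T T' c
    assume "T \<in> {T. natural_labelling E T}" "T' \<in> {T. natural_labelling E T}"
      and eq: "restrict T E = restrict T' E"
    then have "natural_labelling E T" "natural_labelling E T'" by simp_all
    then show "T c = T' c"
      using fun_cong[OF eq, of c] natural_labelling_outside[of E _ c]
      by (cases "c \<in> E") (metis restrict_apply', metis)
  qed
  ultimately show ?thesis using finite_imageD by blast
qed

text \<open>\<^const>\<open>prod_encode\<close> enumerates the cells antidiagonal by antidiagonal.\<close>

lemma prod_encode_strict_mono:
  fixes c d :: "nat \<times> nat"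
  assumes "c < d"
  shows "prod_encode c < prod_encode d"
proof -
  obtain i j i' j' where cd: "c = (i, j)" "d = (i', j')" by fastforce
  have "Suc (i + j) \<le> i' + j'" using assms unfolding cd by (auto simp: less_le)
  then have "triangle (Suc (i + j)) \<le> triangle (i' + j')"
    unfolding triangle_def by (intro div_le_mono mult_le_mono) simp_all
  then show ?thesis unfolding cd prod_encode_def by simp
qed

lemma natural_labelling_exists:
  fixes D :: "(nat \<times> nat) set"
  assumes "finite D"
  shows "\<exists>U. natural_labelling D U"
proof -
  define U where "U c = (if c \<in> D then rank_in D prod_encode c else 0)" for c
  have "bij_betw (rank_in D prod_encode) D {1..card D}"
    using assms by (rule bij_betw_rank_in) (simp add: inj_prod_encode)
  then have "bij_betw U D {1..card D}" by (rule bij_betw_cong[THEN iffD1, rotated]) (simp add: U_def)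
  moreover have "U c < U d" if "c \<in> D" "d \<in> D" "c < d" for c d
    using rank_in_less[OF assms that(1,2) prod_encode_strict_mono[OF that(3)]] that by (simp add: U_def)
  ultimately have "natural_labelling D U" by (intro natural_labellingI) (auto simp: U_def)
  then show ?thesis by blast
qed

definition standardize :: "'a set \<Rightarrow> ('a \<Rightarrow> nat) \<Rightarrow> 'a \<Rightarrow> nat" where
  "standardize D T c = (if c \<in> D then rank_in D T c else 0)"

lemma natural_labelling_standardize:
  assumes "finite E" "D \<subseteq> E" "natural_labelling E T"
  shows "natural_labelling D (standardize D T)"
proof (rule natural_labellingI)
  have "finite D" using assms(1,2) by (rule finite_subset[rotated])
  moreover have "inj_on T D" using natural_labelling_inj[OF assms(3)] assms(2) by (rule inj_on_subset)
  ultimately have "bij_betw (rank_in D T) D {1..card D}" by (rule bij_betw_rank_in)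
  then show "bij_betw (standardize D T) D {1..card D}"
    by (rule bij_betw_cong[THEN iffD1, rotated]) (simp add: standardize_def)
  show "standardize D T c < standardize D T d" if "c \<in> D" "d \<in> D" "c < d" for c d
    using rank_in_less[OF \<open>finite D\<close> that(1,2)] natural_labelling_less[OF assms(3)] that assms(2)
    by (auto simp: standardize_def)
qed (simp add: standardize_def)

lemma standardize_standardize:
  assumes "finite E" "D \<subseteq> E" "inj_on T E"
  shows "standardize D (standardize E T) = standardize D T"
proof
  fix c
  show "standardize D (standardize E T) c = standardize D T c"
  proof (cases "c \<in> D")
    case True
    then have "{d\<in>D. standardize E T d \<le> standardize E T c} = {d\<in>D. T d \<le> T c}"
      using rank_in_le_iff[OF assms(1) _ _ assms(3)] assms(2) by (auto simp: standardize_def)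
    then show ?thesis using True by (simp add: standardize_def rank_in_def)
  qed (simp add: standardize_def)
qed

lemma rank_in_le_natural_labelling:
  assumes "finite E" "D \<subseteq> E" "natural_labelling E T" "d \<in> D"
  shows "rank_in D T d \<le> T d"
proof -
  have "rank_in D T d \<le> rank_in E T d"
    unfolding rank_in_def using assms(1,2) by (intro card_mono) auto
  also have "\<dots> = T d"
    using rank_in_eq_self[OF assms(1) natural_labelling_bij[OF assms(3)]] assms(2,4) by auto
  finally show ?thesis .
qed

section \<open>Attaching chains\<close>

locale chain_extension =
  fixes D :: "'a::order set" and \<alpha> :: 'a and c :: "nat \<Rightarrow> 'a" and x :: nat
  assumes finite_D: "finite D" and corner: "\<alpha> \<in> D"
    and inj_chain: "inj_on c {..<x}" and chain_disjoint: "c ` {..<x} \<inter> D = {}"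
    and chain_le_iff: "\<And>t t'. t < x \<Longrightarrow> t' < x \<Longrightarrow> c t \<le> c t' \<longleftrightarrow> t \<le> t'"
    and le_chain_iff: "\<And>d t. d \<in> D \<Longrightarrow> t < x \<Longrightarrow> d \<le> c t \<longleftrightarrow> d \<le> \<alpha>"
    and not_chain_le: "\<And>d t. d \<in> D \<Longrightarrow> t < x \<Longrightarrow> \<not> c t \<le> d"
begin

abbreviation chain :: "'a set" where
  "chain \<equiv> c ` {..<x}"

lemma card_cells: "card (D \<union> chain) = card D + x"
  using card_Un_disjoint[OF finite_D, of chain] chain_disjoint card_image[OF inj_chain] by auto

lemma chain_not_in_D: "t < x \<Longrightarrow> c t \<notin> D"
  using chain_disjoint by blast

lemma chain_less: "t < x \<Longrightarrow> t' < x \<Longrightarrow> t < t' \<Longrightarrow> c t < c t'"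
  using chain_le_iff inj_onD[OF inj_chain] by (metis lessThan_iff less_le nat_less_le)

lemma corner_less_chain:
  assumes "natural_labelling (D \<union> chain) T" "t < x"
  shows "T \<alpha> < T (c t)"
proof (rule natural_labelling_less[OF assms(1)])
  show "\<alpha> < c t" using le_chain_iff[OF corner assms(2)] chain_not_in_D[OF assms(2)] corner
    by (auto simp: less_le)
qed (use corner assms(2) in auto)

lemma rank_in_chain_index: "t < x \<Longrightarrow> rank_in {..<x} id t = Suc t"
proof -
  assume "t < x"
  then have "{s\<in>{..<x}. id s \<le> id t} = {..t}" by auto
  then show ?thesis unfolding rank_in_def by simp
qed

text \<open>The inverse of \<^term>\<open>\<lambda>T. T ` chain\<close> on the labellings standardizing to \<^term>\<open>U\<close>.\<close>

definition chain_labelling :: "('a \<Rightarrow> nat) \<Rightarrow> nat set \<Rightarrow> 'a \<Rightarrow> nat" where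
  "chain_labelling U A e =
     (if e \<in> D then kth_least ({1..card D + x} - A) (U e)
      else if e \<in> chain then kth_least A (Suc (the_inv_into {..<x} c e)) else 0)"

lemma chain_labelling_chain: "t < x \<Longrightarrow> chain_labelling U A (c t) = kth_least A (Suc t)"
  using chain_not_in_D[of t] inj_chain by (simp add: chain_labelling_def the_inv_into_f_f)

lemma labels_of_chain:
  assumes T: "natural_labelling (D \<union> chain) T" "standardize D T = U"
  shows "T ` chain \<subseteq> {U \<alpha> + 1..card D + x}" and "card (T ` chain) = x"
proof -
  have "U \<alpha> \<le> T \<alpha>"
    using rank_in_le_natural_labelling[OF _ _ T(1) corner] finite_D corner
    unfolding T(2)[symmetric] standardize_def by simp
  moreover have "T \<alpha> < T (c t)" if "t < x" for t using corner_less_chain[OF T(1) that] .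
  moreover have "T ` chain \<subseteq> {1..card D + x}"
    using natural_labelling_bij[OF T(1)] card_cells by (auto simp: bij_betw_def)
  ultimately show "T ` chain \<subseteq> {U \<alpha> + 1..card D + x}" by fastforce
  have "inj_on T chain" using natural_labelling_inj[OF T(1)] by (rule inj_on_subset) blast
  then show "card (T ` chain) = x" by (simp add: card_image inj_chain)
qed

lemma natural_labelling_eq_chain_labelling:
  assumes U: "natural_labelling D U"
    and T: "natural_labelling (D \<union> chain) T" "standardize D T = U"
  shows "T = chain_labelling U (T ` chain)"
proof
  fix e
  have injT: "inj_on T (D \<union> chain)" using natural_labelling_inj[OF T(1)] .
  have U_rank: "U d = rank_in D T d" if "d \<in> D" for d
    using that unfolding T(2)[symmetric] standardize_def by simp
  have TD: "T ` D = {1..card D + x} - T ` chain"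
  proof -
    have "T ` (D \<union> chain) = {1..card D + x}"
      using natural_labelling_bij[OF T(1)] card_cells by (simp add: bij_betw_def)
    moreover have "T ` D \<inter> T ` chain = {}"
      using inj_on_image_Int[OF injT, of D chain] chain_disjoint by auto
    ultimately show ?thesis by (auto simp: image_Un)
  qed
  show "T e = chain_labelling U (T ` chain) e"
  proof (cases "e \<in> D")
    case True
    have "T e = kth_least (T ` D) (rank_in D U e)"
    proof (rule strict_mono_bij_betw_eq_kth_least[OF finite_D _ _ _ True])
      show "bij_betw T D (T ` D)" using inj_on_subset[OF injT] by (simp add: inj_on_imp_bij_betw)
      show "inj_on U D" using natural_labelling_inj[OF U] .
      show "T a < T b" if "a \<in> D" "b \<in> D" "U a < U b" for a b
        using that rank_in_less_iff[OF finite_D that(1,2) inj_on_subset[OF injT]] U_rank by simp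
    qed
    also have "rank_in D U e = U e" using rank_in_eq_self[OF finite_D natural_labelling_bij[OF U] True] .
    finally show ?thesis using True TD by (simp add: chain_labelling_def)
  next
    case notD: False
    show ?thesis
    proof (cases "e \<in> chain")
      case True
      then obtain t where t: "t < x" "e = c t" by blast
      have "(T \<circ> c) t = kth_least (T ` chain) (rank_in {..<x} id t)"
      proof (rule strict_mono_bij_betw_eq_kth_least)
        have "inj_on (T \<circ> c) {..<x}"
          using comp_inj_on[OF inj_chain inj_on_subset[OF injT]] by blast
        then show "bij_betw (T \<circ> c) {..<x} (T ` chain)" by (simp add: bij_betw_def image_comp)
        show "(T \<circ> c) a < (T \<circ> c) b" if "a \<in> {..<x}" "b \<in> {..<x}" "id a < id b" for a b
          using natural_labelling_less[OF T(1)] chain_less that by simp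
      qed (use t in auto)
      then show ?thesis using t chain_labelling_chain rank_in_chain_index by simp
    next
      case False
      then show ?thesis using notD natural_labelling_outside[OF T(1)] by (simp add: chain_labelling_def)
    qed
  qed
qed

context
  fixes U :: "'a \<Rightarrow> nat" and A :: "nat set"
  assumes U: "natural_labelling D U"
    and A: "A \<subseteq> {U \<alpha> + 1..card D + x}" "card A = x"
begin

abbreviation labels_off_chain :: "nat set" where
  "labels_off_chain \<equiv> {1..card D + x} - A"

lemma finite_labels_chain: "finite A"
  using A(1) by (rule finite_subset) simp

lemma card_labels_off_chain: "card labels_off_chain = card D"
proof -
  have "A \<subseteq> {1..card D + x}" using A(1) by auto
  then show ?thesis using card_Diff_subset[OF finite_labels_chain] A(2) by simp
qed

lemma chain_labelling_D: "e \<in> D \<Longrightarrow> chain_labelling U A e = kth_least labels_off_chain (U e)"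
  by (simp add: chain_labelling_def)

lemma labelling_in_range: "e \<in> D \<Longrightarrow> U e \<in> {1..card labels_off_chain}"
  using bij_betwE[OF natural_labelling_bij[OF U]] card_labels_off_chain by simp

lemma bij_betw_chain_labelling_D: "bij_betw (chain_labelling U A) D labels_off_chain"
proof -
  have "bij_betw (kth_least labels_off_chain) {1..card D} labels_off_chain"
    using bij_betw_kth_least[of labels_off_chain] card_labels_off_chain by simp
  then have "bij_betw (kth_least labels_off_chain \<circ> U) D labels_off_chain"
    by (rule bij_betw_trans[OF natural_labelling_bij[OF U]])
  then show ?thesis by (rule bij_betw_cong[THEN iffD1, rotated]) (simp add: chain_labelling_D)
qed

lemma bij_betw_chain_labelling_chain: "bij_betw (chain_labelling U A) chain A"
proof -
  have "bij_betw Suc {..<x} {1..x}"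
    by (rule bij_betw_byWitness[where f' = "\<lambda>k. k - 1"]) auto
  then have "bij_betw (kth_least A \<circ> Suc) {..<x} A"
    using bij_betw_trans bij_betw_kth_least[OF finite_labels_chain, unfolded A(2)] by blast
  then have "bij_betw (chain_labelling U A \<circ> c) {..<x} A"
    by (rule bij_betw_cong[THEN iffD1, rotated]) (simp add: chain_labelling_chain)
  then show ?thesis by (simp only: bij_betw_comp_iff[OF inj_on_imp_bij_betw[OF inj_chain]])
qed

lemma chain_labelling_corner: "chain_labelling U A \<alpha> = U \<alpha>"
proof -
  have "U \<alpha> \<in> {1..card D}" using bij_betwE[OF natural_labelling_bij[OF U]] corner by blast
  moreover have "{1..U \<alpha>} \<subseteq> labels_off_chain" using A(1) calculation by auto
  ultimately have "kth_least labels_off_chain (U \<alpha>) = U \<alpha>"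
    by (intro kth_least_initial_segment) auto
  then show ?thesis using corner by (simp add: chain_labelling_D)
qed

lemma chain_labelling_less:
  assumes "e \<in> D \<union> chain" "e' \<in> D \<union> chain" "e < e'"
  shows "chain_labelling U A e < chain_labelling U A e'"
proof -
  have D_less: "chain_labelling U A d < chain_labelling U A d'"
    if "d \<in> D" "d' \<in> D" "d < d'" for d d'
    using kth_least_less_iff[OF _ labelling_in_range[OF that(1)] labelling_in_range[OF that(2)]]
      natural_labelling_less[OF U that] that
    by (simp add: chain_labelling_D)
  have chain_above_corner: "U \<alpha> < chain_labelling U A (c t)" if "t < x" for t
  proof -
    have "chain_labelling U A (c t) \<in> A"
      using bij_betwE[OF bij_betw_chain_labelling_chain] that by blast
    then show ?thesis using A(1) by auto
  qed
  consider (DD) "e \<in> D" "e' \<in> D"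
    | (DC) t' where "e \<in> D" "t' < x" "e' = c t'"
    | (CD) t where "t < x" "e = c t" "e' \<in> D"
    | (CC) t t' where "t < x" "e = c t" "t' < x" "e' = c t'"
    using assms(1,2) by blast
  then show ?thesis
  proof cases
    case DD
    then show ?thesis using D_less assms(3) by blast
  next
    case DC
    then have "e \<le> \<alpha>" using le_chain_iff assms(3) by (simp add: less_le)
    then have "chain_labelling U A e \<le> U \<alpha>"
      using D_less[OF DC(1) corner] chain_labelling_corner by (cases "e = \<alpha>") (auto simp: less_le)
    then show ?thesis using chain_above_corner[OF DC(2)] DC(3) by simp
  next
    case CD
    then show ?thesis using not_chain_le assms(3) by (simp add: less_le)
  next
    case CC
    then have "t < t'" using chain_le_iff assms(3) by (auto simp: less_le)
    then show ?thesis
      using kth_least_less_iff[OF finite_labels_chain] CC A(2) by (simp add: chain_labelling_chain)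
  qed
qed

lemma chain_labelling_natural: "natural_labelling (D \<union> chain) (chain_labelling U A)"
proof (rule natural_labellingI)
  have "bij_betw (chain_labelling U A) (D \<union> chain) (labels_off_chain \<union> A)"
    by (rule bij_betw_combine[OF bij_betw_chain_labelling_D bij_betw_chain_labelling_chain]) blast
  moreover have "labels_off_chain \<union> A = {1..card (D \<union> chain)}" using A(1) card_cells by auto
  ultimately show "bij_betw (chain_labelling U A) (D \<union> chain) {1..card (D \<union> chain)}" by simp
  show "chain_labelling U A e < chain_labelling U A e'"
    if "e \<in> D \<union> chain" "e' \<in> D \<union> chain" "e < e'" for e e'
    using that by (rule chain_labelling_less)
  show "chain_labelling U A e = 0" if "e \<notin> D \<union> chain" for e
    using that by (simp add: chain_labelling_def)
qed

lemma standardize_chain_labelling: "standardize D (chain_labelling U A) = U"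
proof
  fix e
  show "standardize D (chain_labelling U A) e = U e"
  proof (cases "e \<in> D")
    case True
    have "chain_labelling U A d \<le> chain_labelling U A e \<longleftrightarrow> U d \<le> U e" if "d \<in> D" for d
      using kth_least_le_iff[OF _ labelling_in_range[OF that] labelling_in_range[OF True]] that True
      by (simp add: chain_labelling_D)
    then have "{d\<in>D. chain_labelling U A d \<le> chain_labelling U A e} = {d\<in>D. U d \<le> U e}"
      by auto
    then show ?thesis
      using True rank_in_eq_self[OF finite_D natural_labelling_bij[OF U] True]
      by (simp add: standardize_def rank_in_def)
  qed (simp add: standardize_def natural_labelling_outside[OF U])
qed

end

lemma label_below_corner:
  assumes V: "natural_labelling (D \<union> chain) V" "standardize D V = U"
    and d: "d \<in> D" "U d \<le> U \<alpha>"
  shows "V d = U d"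
proof -
  have finite_cells: "finite (D \<union> chain)" using finite_D by simp
  have injV: "inj_on V (D \<union> chain)" using natural_labelling_inj[OF V(1)] .
  have U_rank: "U e = rank_in D V e" if "e \<in> D" for e
    using that unfolding V(2)[symmetric] standardize_def by simp
  have d_below: "V d \<le> V \<alpha>"
    using d rank_in_le_iff[OF finite_D d(1) corner inj_on_subset[OF injV]] U_rank corner by simp
  have "e \<in> D" if e: "e \<in> D \<union> chain" "V e \<le> V d" for e
  proof (rule ccontr)
    assume "e \<notin> D"
    then obtain t where "t < x" "e = c t" using e(1) by blast
    then show False using e(2) d_below corner_less_chain[OF V(1) \<open>t < x\<close>] by simp
  qed
  then have "{e\<in>D \<union> chain. V e \<le> V d} = {e\<in>D. V e \<le> V d}" by blast
  then have "rank_in (D \<union> chain) V d = U d" using U_rank[OF d(1)] by (simp add: rank_in_def)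
  then show ?thesis
    using rank_in_eq_self[OF finite_cells natural_labelling_bij[OF V(1)]] d(1) by simp
qed

theorem card_fiber:
  assumes U: "natural_labelling D U"
  shows "card {T. natural_labelling (D \<union> chain) T \<and> standardize D T = U}
    = (card D + x - U \<alpha>) choose x"
proof -
  let ?F = "{T. natural_labelling (D \<union> chain) T \<and> standardize D T = U}"
  let ?G = "{A. A \<subseteq> {U \<alpha> + 1..card D + x} \<and> card A = x}"
  have "bij_betw (\<lambda>T. T ` chain) ?F ?G"
  proof (rule bij_betw_byWitness[where f' = "chain_labelling U"])
    show "\<forall>T\<in>?F. chain_labelling U (T ` chain) = T"
      using natural_labelling_eq_chain_labelling[OF U] by auto
    show "\<forall>A\<in>?G. chain_labelling U A ` chain = A"
      using bij_betw_chain_labelling_chain[OF U] by (auto simp: bij_betw_def)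
    show "(\<lambda>T. T ` chain) ` ?F \<subseteq> ?G" using labels_of_chain[of _ U] by blast
    show "chain_labelling U ` ?G \<subseteq> ?F"
      using chain_labelling_natural[OF U] standardize_chain_labelling[OF U] by auto
  qed
  then have "card ?F = card ?G" by (rule bij_betw_same_card)
  also have "\<dots> = card {U \<alpha> + 1..card D + x} choose x" by (rule n_subsets) simp
  finally show ?thesis by simp
qed

end

lemma card_natural_labellings_by_standardize:
  assumes "finite F" "E \<subseteq> F"
  shows "card {T. natural_labelling F T \<and> P (standardize E T)}
    = (\<Sum>V | natural_labelling E V \<and> P V. card {T. natural_labelling F T \<and> standardize E T = V})"
proof -
  let ?S = "{T. natural_labelling F T \<and> P (standardize E T)}"
  let ?Y = "{V. natural_labelling E V \<and> P V}"
  have "finite E" by (rule finite_subset[OF assms(2,1)])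
  have "finite ?S" using finite_natural_labellings[OF assms(1)] by (rule finite_subset[rotated]) auto
  moreover have "finite ?Y" using finite_natural_labellings[OF \<open>finite E\<close>] by (rule finite_subset[rotated]) auto
  moreover have "standardize E ` ?S \<subseteq> ?Y"
    by (rule image_subsetI) (simp add: natural_labelling_standardize[OF assms])
  ultimately have "card ?S = (\<Sum>V\<in>?Y. card {T\<in>?S. standardize E T = V})"
    using sum.group[of ?S ?Y "standardize E" "\<lambda>_. 1::nat", folded card_eq_sum] by simp
  also have "\<dots> = (\<Sum>V\<in>?Y. card {T. natural_labelling F T \<and> standardize E T = V})"
    by (intro sum.cong refl arg_cong[where f = card] Collect_cong) auto
  finally show ?thesis .
qed

lemma card_two_chains_fiber:
  assumes Q: "chain_extension D \<beta> Q y" and P: "chain_extension (D \<union> Q ` {..<y}) \<alpha> P x"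
    and "\<alpha> \<in> D" and U: "natural_labelling D U" and "U \<alpha> \<le> U \<beta>"
  shows "card {T. natural_labelling (D \<union> Q ` {..<y} \<union> P ` {..<x}) T \<and> standardize D T = U}
    = ((card D + y - U \<beta>) choose y) * ((card D + y + x - U \<alpha>) choose x)"
proof -
  interpret Q: chain_extension D \<beta> Q y by (fact Q)
  interpret P: chain_extension "D \<union> Q ` {..<y}" \<alpha> P x by (fact P)
  let ?E = "D \<union> Q ` {..<y}"
  let ?Y = "{V. natural_labelling ?E V \<and> standardize D V = U}"
  have std_D: "standardize D (standardize ?E T) = standardize D T"
    if "natural_labelling (?E \<union> P ` {..<x}) T" for T
    using standardize_standardize[OF _ _ inj_on_subset[OF natural_labelling_inj[OF that]]] Q.finite_D
    by simp
  have "card {T. natural_labelling (?E \<union> P ` {..<x}) T \<and> standardize D T = U}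
      = card {T. natural_labelling (?E \<union> P ` {..<x}) T \<and> standardize D (standardize ?E T) = U}"
    using std_D by (intro arg_cong[where f = card] Collect_cong) auto
  also have "\<dots> = (\<Sum>V\<in>?Y. card {T. natural_labelling (?E \<union> P ` {..<x}) T \<and> standardize ?E T = V})"
    by (rule card_natural_labellings_by_standardize) (simp_all add: Q.finite_D)
  also have "\<dots> = (\<Sum>V\<in>?Y. (card ?E + x - U \<alpha>) choose x)"
  proof (rule sum.cong[OF refl])
    fix V assume "V \<in> ?Y"
    then have V: "natural_labelling ?E V" "standardize D V = U" by auto
    have "V \<alpha> = U \<alpha>" using Q.label_below_corner[OF V \<open>\<alpha> \<in> D\<close> \<open>U \<alpha> \<le> U \<beta>\<close>] .
    then show "card {T. natural_labelling (?E \<union> P ` {..<x}) T \<and> standardize ?E T = V}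
        = (card ?E + x - U \<alpha>) choose x"
      using P.card_fiber[OF V(1)] by simp
  qed
  also have "\<dots> = card ?Y * ((card ?E + x - U \<alpha>) choose x)" by simp
  also have "card ?Y = (card D + y - U \<beta>) choose y" by (rule Q.card_fiber[OF U])
  finally show ?thesis using Q.card_cells by simp
qed

section \<open>Tableaux of shape \<open>\<gamma> \<star> (x, y)\<close>\<close>

lemma young_diagram_eq_UN: "young_diagram la = (\<Union>i<length la. {i} \<times> {..<la ! i})"
  by (auto simp: young_diagram_def)

lemma finite_young_diagram: "finite (young_diagram la)"
  by (simp add: young_diagram_eq_UN)

lemma card_young_diagram: "card (young_diagram la) = sum_list la"
proof -
  have "card (young_diagram la) = (\<Sum>i<length la. card ({i} \<times> {..<la ! i}))"
    unfolding young_diagram_eq_UN by (rule card_UN_disjoint) auto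
  also have "\<dots> = sum_list la" by (simp add: sum_list_sum_nth atLeast0LessThan)
  finally show ?thesis .
qed

lemma char_degree_eq_card_natural_labellings:
  "char_degree la = card {T. natural_labelling (young_diagram la) T}"
proof -
  have "is_syt la T \<longleftrightarrow> natural_labelling (young_diagram la) T" for T
    unfolding is_syt_def natural_labelling_def card_young_diagram less_le
    by (auto simp: Ball_def)
  then have "{T. is_syt la T} = {T. natural_labelling (young_diagram la) T}" by blast
  then show ?thesis unfolding char_degree_def by simp
qed

locale nonempty_partition =
  fixes \<gamma> :: "nat list" and m :: nat
  assumes partition: "is_partition m \<gamma>" and nonempty: "\<gamma> \<noteq> []"
begin

abbreviation top_corner :: "nat \<times> nat" where
  "top_corner \<equiv> (0, hd \<gamma> - 1)"

abbreviation bottom_corner :: "nat \<times> nat" where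
  "bottom_corner \<equiv> (length \<gamma> - 1, 0)"

definition arm :: "nat \<Rightarrow> nat \<times> nat" where
  "arm t = (0, hd \<gamma> + t)"

definition leg :: "nat \<Rightarrow> nat \<times> nat" where
  "leg t = (length \<gamma> + t, 0)"

lemma part_positive: "k \<in> set \<gamma> \<Longrightarrow> 0 < k"
  using partition by (simp add: is_partition_def)

lemma nth_le_hd: "i < length \<gamma> \<Longrightarrow> \<gamma> ! i \<le> hd \<gamma>"
  using partition nonempty sorted_wrt_nth_less[of "(\<ge>)" \<gamma> 0 i]
  by (cases i) (auto simp: is_partition_def hd_conv_nth)

lemma card_cells: "card (young_diagram \<gamma>) = m"
  using partition by (simp add: card_young_diagram is_partition_def)

lemma cell_bounds: "(i, j) \<in> young_diagram \<gamma> \<Longrightarrow> i < length \<gamma> \<and> j < hd \<gamma>"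
  using nth_le_hd by (fastforce simp: young_diagram_def)

lemma top_corner_in: "top_corner \<in> young_diagram \<gamma>"
  using nonempty part_positive[of "hd \<gamma>"] by (simp add: young_diagram_def hd_conv_nth)

lemma bottom_corner_in: "bottom_corner \<in> young_diagram \<gamma>"
  using nonempty part_positive[of "\<gamma> ! (length \<gamma> - 1)"] by (simp add: young_diagram_def)

lemma in_arm_image: "(i, j) \<in> arm ` {..<x} \<longleftrightarrow> i = 0 \<and> hd \<gamma> \<le> j \<and> j < hd \<gamma> + x"
  by (auto simp: arm_def image_iff intro!: bexI[of _ "j - hd \<gamma>"])

lemma in_leg_image: "(i, j) \<in> leg ` {..<y} \<longleftrightarrow> length \<gamma> \<le> i \<and> i < length \<gamma> + y \<and> j = 0"
  by (auto simp: leg_def image_iff intro!: bexI[of _ "i - length \<gamma>"])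

lemma length_star: "length (star \<gamma> x y) = length \<gamma> + y"
  using nonempty by (cases \<gamma>) (simp_all add: star_def)

lemma nth_star:
  "star \<gamma> x y ! i = (if i = 0 then hd \<gamma> + x else if i < length \<gamma> then \<gamma> ! i else 1)"
  if "i < length \<gamma> + y"
  using nonempty that by (cases \<gamma>) (auto simp: star_def nth_append nth_Cons')

lemma young_diagram_star:
  "young_diagram (star \<gamma> x y) = young_diagram \<gamma> \<union> leg ` {..<y} \<union> arm ` {..<x}"
proof (intro set_eqI)
  fix c :: "nat \<times> nat"
  obtain i j where c: "c = (i, j)" by fastforce
  have "hd \<gamma> = \<gamma> ! 0" using nonempty by (simp add: hd_conv_nth)
  then show "c \<in> young_diagram (star \<gamma> x y) \<longleftrightarrow> c \<in> young_diagram \<gamma> \<union> leg ` {..<y} \<union> arm ` {..<x}"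
    unfolding c Un_iff in_arm_image in_leg_image using nonempty
    by (auto simp: young_diagram_def length_star nth_star split: if_splits)
qed

lemma arm_extension: "chain_extension (young_diagram \<gamma> \<union> leg ` {..<y}) top_corner arm x"
proof unfold_locales
  have "0 < hd \<gamma>" using nonempty part_positive by simp
  then have below_arm: "j < hd \<gamma>" if "(i, j) \<in> young_diagram \<gamma> \<union> leg ` {..<y}" for i j
    using that cell_bounds nonempty by (auto simp: in_leg_image)
  show "finite (young_diagram \<gamma> \<union> leg ` {..<y})" by (simp add: finite_young_diagram)
  show "top_corner \<in> young_diagram \<gamma> \<union> leg ` {..<y}" using top_corner_in by simp
  show "inj_on arm {..<x}" by (simp add: arm_def inj_on_def)
  show "arm ` {..<x} \<inter> (young_diagram \<gamma> \<union> leg ` {..<y}) = {}"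
    using below_arm by (fastforce simp: arm_def)
  show "arm t \<le> arm t' \<longleftrightarrow> t \<le> t'" for t t' by (simp add: arm_def)
  show "d \<le> arm t \<longleftrightarrow> d \<le> top_corner" if "d \<in> young_diagram \<gamma> \<union> leg ` {..<y}" for d t
    using that below_arm[of "fst d" "snd d"] by (cases d) (auto simp: arm_def)
  show "\<not> arm t \<le> d" if "d \<in> young_diagram \<gamma> \<union> leg ` {..<y}" for d t
    using that below_arm[of "fst d" "snd d"] by (cases d) (auto simp: arm_def)
qed

lemma leg_extension: "chain_extension (young_diagram \<gamma> \<union> arm ` {..<x}) bottom_corner leg y"
proof unfold_locales
  have "0 < length \<gamma>" using nonempty by simp
  then have left_of_leg: "i < length \<gamma>" if "(i, j) \<in> young_diagram \<gamma> \<union> arm ` {..<x}" for i j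
    using that cell_bounds nonempty part_positive[of "hd \<gamma>"] by (auto simp: in_arm_image)
  show "finite (young_diagram \<gamma> \<union> arm ` {..<x})" by (simp add: finite_young_diagram)
  show "bottom_corner \<in> young_diagram \<gamma> \<union> arm ` {..<x}" using bottom_corner_in by simp
  show "inj_on leg {..<y}" by (simp add: leg_def inj_on_def)
  show "leg ` {..<y} \<inter> (young_diagram \<gamma> \<union> arm ` {..<x}) = {}"
    using left_of_leg by (fastforce simp: leg_def)
  show "leg t \<le> leg t' \<longleftrightarrow> t \<le> t'" for t t' by (simp add: leg_def)
  show "d \<le> leg t \<longleftrightarrow> d \<le> bottom_corner" if "d \<in> young_diagram \<gamma> \<union> arm ` {..<x}" for d t
    using that left_of_leg[of "fst d" "snd d"] by (cases d) (auto simp: leg_def)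
  show "\<not> leg t \<le> d" if "d \<in> young_diagram \<gamma> \<union> arm ` {..<x}" for d t
    using that left_of_leg[of "fst d" "snd d"] by (cases d) (auto simp: leg_def)
qed

end

section \<open>Binomial estimates\<close>

lemma binomial_strict_mono_sum_less:
  assumes "k < k'" "k + k' < n"
  shows "n choose k < n choose k'"
proof (cases "2 * k' \<le> n")
  case True
  with assms(1) show ?thesis by (rule binomial_strict_mono)
next
  case False
  have "n choose k < n choose (n - k')" using assms False by (intro binomial_strict_mono) auto
  also have "\<dots> = n choose k'" using assms by (intro binomial_symmetric[symmetric]) auto
  finally show ?thesis .
qed

lemma binomial_product_step_less:
  fixes r s N z :: nat
  assumes "r < s" "0 < z" "z \<le> N" "N < 2 * z"
  shows "((r + z) choose z) * ((s + N) choose (N - z))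
    < ((r + z - 1) choose (z - 1)) * ((s + N) choose (N - z + 1))"
proof -
  define A where "A = (r + z - 1) choose (z - 1)"
  define B where "B = (s + N) choose (N - z)"
  define K where "K = N - z + 1"
  have "0 < A" "0 < B" "0 < K" unfolding A_def B_def K_def by simp_all
  have absorb_z: "z * ((r + z) choose z) = (r + z) * A"
    using times_binomial_minus1_eq[OF \<open>0 < z\<close>, of "r + z"] unfolding A_def by simp
  have absorb_K: "K * ((s + N) choose K) = (s + z) * B"
    using binomial_absorption[of "N - z" "s + N"] binomial_absorb_comp[of "s + N" "N - z"] assms(3)
    unfolding K_def B_def by simp
  have "(r + z) * K < (s + z) * z"
  proof -
    have "K \<le> z" unfolding K_def using assms(4) by simp
    then have "(r + z) * K \<le> (r + z) * z" by (rule mult_le_mono2)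
    also have "\<dots> < (s + z) * z" using assms(1,2) by simp
    finally show ?thesis .
  qed
  have "z * K * (((r + z) choose z) * B) = (z * ((r + z) choose z)) * (K * B)"
    by (simp only: mult_ac)
  also have "\<dots> = (r + z) * K * (A * B)" by (simp only: absorb_z mult_ac)
  also have "\<dots> < (s + z) * z * (A * B)"
    using \<open>(r + z) * K < (s + z) * z\<close> \<open>0 < A\<close> \<open>0 < B\<close> by simp
  also have "\<dots> = z * A * ((s + z) * B)" by (simp only: mult_ac)
  also have "\<dots> = z * A * (K * ((s + N) choose K))" by (simp only: absorb_K)
  also have "\<dots> = z * K * (A * ((s + N) choose K))" by (simp only: mult_ac)
  finally show ?thesis unfolding A_def B_def K_def by simp
qed

lemma less_of_descending_steps:
  fixes f :: "nat \<Rightarrow> nat"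
  assumes "\<And>z. lo < z \<Longrightarrow> z \<le> hi \<Longrightarrow> f z < f (z - 1)" and "lo < hi"
  shows "f hi < f lo"
  using assms
proof (induction hi)
  case (Suc h)
  have step: "f (Suc h) < f h" using Suc.prems(1)[of "Suc h"] Suc.prems(2) by simp
  show ?case
  proof (cases "lo = h")
    case False
    then have "f h < f lo" using Suc by simp
    then show ?thesis using step by simp
  qed (use step in simp)
qed simp

text \<open>The number of labellings of \<^term>\<open>star \<gamma> x y\<close> standardizing to a labelling of
  \<^term>\<open>\<gamma>\<close> that gives the ends of the first row and column the labels \<^term>\<open>i\<close> and
  \<^term>\<open>j\<close>, counted by attaching first the chain at the corner with the larger label.\<close>

definition extension_count :: "nat \<Rightarrow> nat \<Rightarrow> nat \<Rightarrow> nat \<Rightarrow> nat \<Rightarrow> nat" where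
  "extension_count m x y i j =
     (if i \<le> j then ((m + y - j) choose y) * ((m + y + x - i) choose x)
      else ((m + x - i) choose x) * ((m + x + y - j) choose y))"

lemma extension_count_shift_less:
  assumes "1 \<le> i" "i \<le> m" "1 \<le> j" "j \<le> m" "1 \<le> p" "y + p + m \<le> x" "y + 2 * p \<le> x + 1"
  shows "extension_count m x y i j < extension_count m (x - p) (y + p) i j"
proof (cases "i \<le> j")
  case True
  define M where "M = m + y + x - i"
  have "(m + y - j) choose y = (m + y - j) choose (m - j)"
    using assms(4) by (subst binomial_symmetric) (auto simp: algebra_simps)
  also have "\<dots> \<le> (m + (y + p) - j) choose (m - j)" by (rule binomial_right_mono) simp
  also have "\<dots> = (m + (y + p) - j) choose (y + p)"
    using assms(4) by (subst binomial_symmetric) (auto simp: algebra_simps)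
  finally have leg_factor: "(m + y - j) choose y \<le> (m + (y + p) - j) choose (y + p)" .
  have "M choose x = M choose (M - x)" using assms by (intro binomial_symmetric) (simp add: M_def)
  also have "\<dots> < M choose (x - p)"
    using assms by (intro binomial_strict_mono_sum_less) (simp_all add: M_def)
  finally have arm_factor: "M choose x < M choose (x - p)" .
  have "0 < (m + y - j) choose y" using assms(4) by simp
  then have "((m + y - j) choose y) * (M choose x) < ((m + (y + p) - j) choose (y + p)) * (M choose (x - p))"
    using leg_factor arm_factor by (intro mult_le_less_imp_less) auto
  moreover have "m + (y + p) + (x - p) - i = M" using assms unfolding M_def by simp
  ultimately show ?thesis using True unfolding extension_count_def M_def by simp
next
  case False
  define G where "G z = ((m - i + z) choose z) * ((m - j + (x + y)) choose (x + y - z))" for z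
  have "G x < G (x - p)"
  proof (rule less_of_descending_steps[where f = G])
    show "G z < G (z - 1)" if "x - p < z" "z \<le> x" for z
      using binomial_product_step_less[of "m - i" "m - j" z "x + y"] that assms False
      unfolding G_def by (simp add: Suc_diff_le)
  qed (use assms in simp)
  moreover have "G x = ((m + x - i) choose x) * ((m + x + y - j) choose y)"
    using assms unfolding G_def by (simp add: algebra_simps)
  moreover have "G (x - p) = ((m + (x - p) - i) choose (x - p)) * ((m + (x - p) + (y + p) - j) choose (y + p))"
    using assms unfolding G_def by (simp add: algebra_simps)
  ultimately show ?thesis using False unfolding extension_count_def by simp
qed

lemma (in nonempty_partition) char_degree_star:
  "char_degree (star \<gamma> x y) = (\<Sum>U | natural_labelling (young_diagram \<gamma>) U.
     extension_count m x y (U top_corner) (U bottom_corner))"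
proof -
  let ?D = "young_diagram \<gamma>"
  let ?F = "?D \<union> leg ` {..<y} \<union> arm ` {..<x}"
  have "char_degree (star \<gamma> x y) = card {T. natural_labelling ?F T}"
    by (simp add: char_degree_eq_card_natural_labellings young_diagram_star)
  also have "\<dots> = (\<Sum>U | natural_labelling ?D U. card {T. natural_labelling ?F T \<and> standardize ?D T = U})"
    using card_natural_labellings_by_standardize[of ?F ?D "\<lambda>_. True"]
    by (simp add: finite_young_diagram sup_assoc)
  also have "\<dots> = (\<Sum>U | natural_labelling ?D U. extension_count m x y (U top_corner) (U bottom_corner))"
  proof (rule sum.cong[OF refl])
    fix U assume "U \<in> {U. natural_labelling ?D U}"
    then have U: "natural_labelling ?D U" by simp
    have leg0: "chain_extension ?D bottom_corner leg y" using leg_extension[of 0] by simp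
    have arm0: "chain_extension ?D top_corner arm x" using arm_extension[of 0] by simp
    show "card {T. natural_labelling ?F T \<and> standardize ?D T = U}
        = extension_count m x y (U top_corner) (U bottom_corner)"
    proof (cases "U top_corner \<le> U bottom_corner")
      case True
      then show ?thesis
        using card_two_chains_fiber[OF leg0 arm_extension top_corner_in U] card_cells
        by (simp add: extension_count_def)
    next
      case False
      have "?F = ?D \<union> arm ` {..<x} \<union> leg ` {..<y}" by blast
      then show ?thesis
        using card_two_chains_fiber[OF arm0 leg_extension bottom_corner_in U] False card_cells
        by (simp add: extension_count_def)
    qed
  qed
  finally show ?thesis .
qed

theorem (in nonempty_partition) char_degree_star_shift_less:
  assumes "1 \<le> p" "y + p + m \<le> x" "y + 2 * p \<le> x + 1"
  shows "char_degree (star \<gamma> x y) < char_degree (star \<gamma> (x - p) (y + p))"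
proof -
  let ?S = "{U. natural_labelling (young_diagram \<gamma>) U}"
  have "finite ?S" by (rule finite_natural_labellings[OF finite_young_diagram])
  moreover have "?S \<noteq> {}" using natural_labelling_exists[OF finite_young_diagram] by simp
  moreover have "extension_count m x y (U top_corner) (U bottom_corner)
      < extension_count m (x - p) (y + p) (U top_corner) (U bottom_corner)" if "U \<in> ?S" for U
  proof -
    have "U top_corner \<in> {1..m}" "U bottom_corner \<in> {1..m}"
      using bij_betwE[OF natural_labelling_bij] that top_corner_in bottom_corner_in card_cells
      by fastforce+
    then show ?thesis using assms by (intro extension_count_shift_less) auto
  qed
  ultimately show ?thesis unfolding char_degree_star by (rule sum_strict_mono)
qed

lemma star_Nil: "0 < x \<Longrightarrow> star [] x y = star [1] (x - 1) y"
  by (simp add: star_def)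

theorem lemma3p3:
  fixes p m n w a :: nat and \<gamma> :: "nat list"
  assumes "prime p"
    and "m < p"
    and "n = m + p * w"
    and "is_partition m \<gamma>"
    and "(w + 1) div 2 + 1 \<le> a"
    and "a \<le> w"
  shows "char_degree (star \<gamma> (a * p) ((w - a) * p))
           < char_degree (star \<gamma> ((a - 1) * p) ((w - a + 1) * p))"
proof -
  define x where "x = a * p"
  define y where "y = (w - a) * p"
  have "2 \<le> p" using assms(1) by (rule prime_ge_2_nat)
  have "(w - a + 2) * p \<le> a * p" using assms(5,6) by (intro mult_le_mono1) linarith
  then have "y + 2 * p \<le> x" unfolding x_def y_def by (simp add: algebra_simps)
  have shifted: "(a - 1) * p = x - p" "(w - a + 1) * p = y + p"
    unfolding x_def y_def by (simp_all add: algebra_simps diff_mult_distrib)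
  have "char_degree (star \<gamma> x y) < char_degree (star \<gamma> (x - p) (y + p))"
  proof (cases "\<gamma> = []")
    case False
    then interpret nonempty_partition \<gamma> m using assms(4) by unfold_locales
    show ?thesis using \<open>2 \<le> p\<close> \<open>y + 2 * p \<le> x\<close> assms(2) by (intro char_degree_star_shift_less) auto
  next
    case True
    interpret nonempty_partition "[1]" 1 by unfold_locales (simp_all add: is_partition_def)
    have "char_degree (star [1] (x - 1) y) < char_degree (star [1] (x - 1 - p) (y + p))"
      using \<open>2 \<le> p\<close> \<open>y + 2 * p \<le> x\<close> by (intro char_degree_star_shift_less) auto
    then show ?thesis using True \<open>2 \<le> p\<close> \<open>y + 2 * p \<le> x\<close> by (simp add: star_Nil)
  qed
  then show ?thesis unfolding shifted x_def y_def .
qed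

end
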